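(* Let $A\in\mathbb{Z}^{m\times n}$ have full column rank, $b\in\mathbb{Z}^m$, $P=P(A,b)=\{x\in\mathbb{R}^n: Ax\le b\}$, and let $\alpha\in\mathbb{Z}^n$ be nonzero. Suppose $P\cap\mathbb{Z}^n=\{0\}$. Then $\operatorname{prox}_1(A,b,\alpha)<1$ and $\operatorname{prox}_2(A,b,\alpha)<1$.
   Context: For $I\subseteq[m]$, $A_I$ denotes the rows of $A$ indexed by $I$; $\ker A_\emptyset=\mathbb{R}^n$. For $I$ with $|I|\le n-1$ and $\operatorname{rank}A_I=|I|$, $P_I=P\cap\ker A_I$. $\gcd A_I$ is the gcd of the absolute values of all $\operatorname{rank}(A_I)\times\operatorname{rank}(A_I)$ minors of $A_I$ ($\gcd A_\emptyset=1$). $\Delta^\alpha_I(A)=\frac{1}{\gcd A_I}\max\left\{\left|\det\begin{pmatrix}\alpha^\top\\ A_K\end{pmatrix}\right|: I\subseteq K\subseteq[m],\ |K|=n-1\right\}$. $\operatorname{prox}_I(A,b,\alpha)$ is the number with $\max_{x\in P_I}\alpha^\top x=\operatorname{prox}_I(A,b,\alpha)\Delta^\alpha_I(A)$, and $\operatorname{prox}_d(A,b,\alpha)=\max\{\operatorname{prox}_I(A,b,\alpha):\dim P_I=d\}$. *)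

theory Defs
  imports "HOL-Analysis.Analysis" "HOL-Combinatorics.Permutations"
begin

definition realM :: "int^'n^'m \<Rightarrow> real^'n^'m" where
  "realM A = (\<chi> i j. real_of_int (A $ i $ j))"

definition realV :: "int^'n \<Rightarrow> real^'n" where
  "realV v = (\<chi> j. real_of_int (v $ j))"

definition polyP :: "int^'n^'m \<Rightarrow> int^'m \<Rightarrow> (real^'n) set" where
  "polyP A b = {x. \<forall>i. row i (realM A) \<bullet> x \<le> real_of_int (b $ i)}"

definition kerRows :: "int^'n^'m \<Rightarrow> 'm set \<Rightarrow> (real^'n) set" where
  "kerRows A I = {x. \<forall>i\<in>I. row i (realM A) \<bullet> x = 0}"

definition faceP :: "int^'n^'m \<Rightarrow> int^'m \<Rightarrow> 'm set \<Rightarrow> (real^'n) set" where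
  "faceP A b I = polyP A b \<inter> kerRows A I"

definition rankRows :: "int^'n^'m \<Rightarrow> 'm set \<Rightarrow> nat" where
  "rankRows A I = dim ((\<lambda>i. row i (realM A)) ` I)"

definition ldet :: "nat \<Rightarrow> (nat \<Rightarrow> nat \<Rightarrow> int) \<Rightarrow> int" where
  "ldet k M = (\<Sum>p | p permutes {..<k}. sign p * (\<Prod>i<k. M i (p i)))"

text \<open>An enumeration of a finite set (arbitrary order; only absolute values of
  determinants are used, which do not depend on the chosen orders).\<close>
definition enum_set :: "'a set \<Rightarrow> nat \<Rightarrow> 'a" where
  "enum_set S = (SOME f. bij_betw f {..<card S} S)"

definition absMinor :: "int^'n^'m \<Rightarrow> 'm set \<Rightarrow> 'n set \<Rightarrow> int" where
  "absMinor A R C = \<bar>ldet (card R) (\<lambda>i j. A $ enum_set R i $ enum_set C j)\<bar>"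

text \<open>gcd A_I: gcd of the absolute values of all rank(A_I) x rank(A_I) minors of A_I
  (for I = {} this is the gcd of the single empty minor 1, i.e. 1).\<close>
definition gcdRows :: "int^'n^'m \<Rightarrow> 'm set \<Rightarrow> int" where
  "gcdRows A I = Gcd {absMinor A R C | R C. R \<subseteq> I \<and> card R = rankRows A I
                                         \<and> card C = rankRows A I}"

definition absDetAlphaRows :: "int^'n \<Rightarrow> int^'n^'m \<Rightarrow> 'm set \<Rightarrow> int" where
  "absDetAlphaRows \<alpha> A K =
     \<bar>ldet CARD('n) (\<lambda>i j. if i = 0 then \<alpha> $ enum_set (UNIV::'n set) j
                            else A $ enum_set K (i - 1) $ enum_set (UNIV::'n set) j)\<bar>"

definition DeltaI :: "int^'n \<Rightarrow> int^'n^'m \<Rightarrow> 'm set \<Rightarrow> real" where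
  "DeltaI \<alpha> A I =
     real_of_int (Max {absDetAlphaRows \<alpha> A K | K. I \<subseteq> K \<and> card K = CARD('n) - 1})
       / real_of_int (gcdRows A I)"

definition admissible :: "int^'n^'m \<Rightarrow> 'm set \<Rightarrow> bool" where
  "admissible A I \<longleftrightarrow> card I \<le> CARD('n) - 1 \<and> rankRows A I = card I"

definition is_proxI :: "int^'n^'m \<Rightarrow> int^'m \<Rightarrow> int^'n \<Rightarrow> 'm set \<Rightarrow> real \<Rightarrow> bool" where
  "is_proxI A b \<alpha> I p \<longleftrightarrow>
     (\<exists>x\<in>faceP A b I. realV \<alpha> \<bullet> x = p * DeltaI \<alpha> A I) \<and>
     (\<forall>y\<in>faceP A b I. realV \<alpha> \<bullet> y \<le> p * DeltaI \<alpha> A I)"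

definition prox_lt_one :: "int^'n^'m \<Rightarrow> int^'m \<Rightarrow> int^'n \<Rightarrow> int \<Rightarrow> bool" where
  "prox_lt_one A b \<alpha> d \<longleftrightarrow>
     (\<forall>I. admissible A I \<and> aff_dim (faceP A b I) = d \<longrightarrow>
          (\<exists>p. is_proxI A b \<alpha> I p \<and> p < 1))"

end

theory Submission
  imports Defs "Jordan_Normal_Form.Determinant" "HOL-Analysis.Kronecker_Approximation_Theorem"
begin

(*
  Since 0 is the only integer point of P, we have b \<ge> 0, so P_I contains 0 and, for
  dim P_I = d, its linear hull is ker A_K for rows K \<supseteq> I of A with A_K of full rank n - d.
  Expanding determinants along the rows of A_I shows that gcd A_I divides the cofactors
  det(\<beta>; A_K; \<dots>), which is how \<Delta>\<^sup>\<beta>_I enters.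

  d = 1: ker A_K is spanned by an integer vector w with |\<beta>\<^sup>T w| \<le> \<Delta>\<^sup>\<beta>_I. As the segment P_I
  contains no integer point besides 0, every v \<in> P_I is t w with |t| < 1.

  d = 2: ker A_K contains a primitive integer vector g \<perp> \<beta> and an integer vector u with
  \<beta>\<^sup>T u = \<gamma>, and \<gamma> |A_k\<^sup>T g| \<le> \<Delta>\<^sup>\<beta>_I for every row A_k outside A_K. If v \<in> P_I had
  \<beta>\<^sup>T v \<ge> \<Delta>\<^sup>\<beta>_I, write u = r g + (\<gamma> / \<beta>\<^sup>T v) v; Dirichlet's approximation of r by h/k
  then yields the nonzero integer point k u - h g of P.

  Taking \<beta> = \<plusminus>e_j shows that P_I is bounded, so max \<alpha>\<^sup>T x over P_I is attained and is
  below \<Delta>\<^sup>\<alpha>_I, that is prox_I < 1.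
*)

(* Jordan_Normal_Form's vector syntax would shadow the HOL-Analysis syntax used in Defs. *)
no_notation vec_index (infixl "$" 100)
no_notation scalar_prod (infix "\<bullet>" 70)
hide_const (open) Matrix.orthogonal

section \<open>Linear algebra and integer vectors\<close>

lemma dim_one_subspace_multiple:
  fixes w v :: "'a::euclidean_space"
  assumes "subspace S" "dim S = 1" "w \<in> S" "w \<noteq> 0" "v \<in> S"
  obtains t where "v = t *\<^sub>R w"
proof -
  have "S \<subseteq> span {w}" using card_ge_dim_independent[of "{w}" S] assms by auto
  then show ?thesis using assms(5) that unfolding span_singleton by auto
qed

lemma dim_two_subspace_decompose:
  fixes \<beta> g v u :: "'a::euclidean_space"
  assumes S: "subspace S" "dim S = 2" and in_S: "g \<in> S" "v \<in> S" "u \<in> S"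
    and g: "g \<noteq> 0" "\<beta> \<bullet> g = 0" and v: "\<beta> \<bullet> v \<noteq> 0"
  obtains r where "u = r *\<^sub>R g + ((\<beta> \<bullet> u) / (\<beta> \<bullet> v)) *\<^sub>R v"
proof -
  have "v \<notin> span {g}" using g(2) v by (auto simp: span_singleton)
  then have "independent {v, g}" by (rule independent_insertI) (use g(1) in simp)
  moreover have "v \<noteq> g" using g(2) v by auto
  ultimately have "S \<subseteq> span {v, g}" using card_ge_dim_independent[of "{v, g}" S] in_S S(2) by auto
  then obtain a where "u - a *\<^sub>R v \<in> span {g}" using in_S(3) unfolding span_insert by blast
  then obtain r where "u - a *\<^sub>R v = r *\<^sub>R g" unfolding span_singleton by blast
  then have r: "u = r *\<^sub>R g + a *\<^sub>R v" by (simp add: algebra_simps)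
  then have "\<beta> \<bullet> u = a * (\<beta> \<bullet> v)" using g(2) by (simp add: inner_add_right)
  then have "a = (\<beta> \<bullet> u) / (\<beta> \<bullet> v)" using v by simp
  then have "u = r *\<^sub>R g + ((\<beta> \<bullet> u) / (\<beta> \<bullet> v)) *\<^sub>R v" using r by simp
  then show ?thesis by (rule that)
qed

definition int_inner :: "int^'n::finite \<Rightarrow> int^'n \<Rightarrow> int" where
  "int_inner x y = (\<Sum>k\<in>UNIV. x $ k * y $ k)"

lemma int_inner_commute: "int_inner x y = int_inner y x"
  unfolding int_inner_def by (simp add: mult.commute)

lemma int_inner_axis: "int_inner c (axis k 1) = c $ k"
  unfolding int_inner_def axis_def by (simp add: if_distrib cong: if_cong)

lemma int_inner_scale_left: "int_inner (a *s x) y = a * int_inner x y"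
  unfolding int_inner_def by (simp add: sum_distrib_left mult.assoc)

lemma int_inner_scale_right: "int_inner x (a *s y) = a * int_inner x y"
  unfolding int_inner_def by (simp add: sum_distrib_left algebra_simps)

lemma int_inner_diff_left: "int_inner (x - y) z = int_inner x z - int_inner y z"
  unfolding int_inner_def by (simp add: left_diff_distrib sum_subtractf)

lemma int_inner_zero_left [simp]: "int_inner 0 y = 0"
  unfolding int_inner_def by simp

lemma Gcd_image_bezout:
  fixes g :: "'a \<Rightarrow> int"
  assumes "finite S"
  shows "\<exists>c. (\<Sum>k\<in>S. c k * g k) = Gcd (g ` S)"
  using assms
proof (induction S rule: finite_induct)
  case empty
  show ?case by simp
next
  case (insert a S)
  obtain c where c: "(\<Sum>k\<in>S. c k * g k) = Gcd (g ` S)" using insert.IH by blast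
  obtain s t where st: "s * g a + t * Gcd (g ` S) = gcd (g a) (Gcd (g ` S))"
    using bezout_int by blast
  define c' where "c' k = (if k = a then s else t * c k)" for k
  have "(\<Sum>k\<in>S. c' k * g k) = t * (\<Sum>k\<in>S. c k * g k)"
    unfolding sum_distrib_left using insert.hyps(2) by (intro sum.cong) (auto simp: c'_def)
  then have "(\<Sum>k\<in>insert a S. c' k * g k) = s * g a + t * Gcd (g ` S)"
    using insert.hyps c by (simp add: c'_def)
  then show ?case using st by auto
qed

lemma int_vec_primitive_factor:
  fixes g :: "int^'n::finite"
  assumes "g \<noteq> 0"
  obtains \<gamma> g1 c where "\<gamma> > 0" "g = \<gamma> *s g1" "int_inner c g1 = 1"
proof -
  define \<gamma> where "\<gamma> = Gcd (range (($) g))"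
  obtain lam where lam: "(\<Sum>k\<in>UNIV. lam k * g $ k) = \<gamma>"
    using Gcd_image_bezout[of UNIV "($) g"] unfolding \<gamma>_def by auto
  have "\<gamma> \<noteq> 0" using assms unfolding \<gamma>_def by (auto simp: Finite_Cartesian_Product.vec_eq_iff)
  moreover have "\<gamma> \<ge> 0" unfolding \<gamma>_def by simp
  ultimately have \<gamma>: "\<gamma> > 0" by simp
  define g1 where "g1 = (\<chi> k. g $ k div \<gamma>)"
  have "\<gamma> dvd g $ k" for k unfolding \<gamma>_def by (rule Gcd_dvd) simp
  then have g: "g = \<gamma> *s g1" unfolding g1_def by (simp add: Finite_Cartesian_Product.vec_eq_iff)
  have "\<gamma> * int_inner (\<chi> k. lam k) g1 = int_inner (\<chi> k. lam k) g"
    unfolding g int_inner_scale_right by (rule refl)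
  also have "\<dots> = \<gamma>" using lam unfolding int_inner_def by simp
  finally have "int_inner (\<chi> k. lam k) g1 = 1" using \<gamma> by simp
  with \<gamma> g show ?thesis using that by blast
qed

lemma realV_nth [simp]: "realV v $ k = real_of_int (v $ k)"
  unfolding realV_def by simp

lemma inj_realV: "inj realV"
  by (rule injI) (simp add: Finite_Cartesian_Product.vec_eq_iff)

lemma realV_zero_iff [simp]: "realV v = 0 \<longleftrightarrow> v = 0"
  by (simp add: Finite_Cartesian_Product.vec_eq_iff)

lemma realV_axis: "realV (axis k 1) = axis k 1"
  by (simp add: Finite_Cartesian_Product.vec_eq_iff axis_def)

lemma realV_diff: "realV (x - y) = realV x - realV y"
  by (simp add: Finite_Cartesian_Product.vec_eq_iff)

lemma realV_minus: "realV (- x) = - realV x"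
  by (simp add: Finite_Cartesian_Product.vec_eq_iff)

lemma realV_scale: "realV (a *s x) = real_of_int a *\<^sub>R realV x"
  by (simp add: Finite_Cartesian_Product.vec_eq_iff)

lemma realV_inner: "realV x \<bullet> realV y = real_of_int (int_inner x y)"
  unfolding inner_vec_def int_inner_def by simp

section \<open>Determinants of lists of integer rows\<close>

lemma ldet_eq_det: "ldet k M = det (mat k k (\<lambda>(i,j). M i j))"
proof -
  have "det (mat k k (\<lambda>(i,j). M i j)) = (\<Sum>p \<in> {p. p permutes {0..<k}}.
      signof p * (\<Prod>i = 0..<k. mat k k (\<lambda>(i,j). M i j) $$ (i, p i)))"
    by (rule det_def') auto
  also have "\<dots> = (\<Sum>p | p permutes {..<k}. sign p * (\<Prod>i<k. M i (p i)))"
  proof (rule sum.cong)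
    show "{p. p permutes {0..<k}} = {p. p permutes {..<k}}" by (simp add: atLeast0LessThan)
  next
    fix p assume "p \<in> {p. p permutes {..<k}}"
    then have "(\<Prod>i = 0..<k. mat k k (\<lambda>(i,j). M i j) $$ (i, p i)) = (\<Prod>i<k. M i (p i))"
      using permutes_in_image by (fastforce simp: atLeast0LessThan intro!: prod.cong)
    then show "signof p * (\<Prod>i = 0..<k. mat k k (\<lambda>(i,j). M i j) $$ (i, p i))
        = sign p * (\<Prod>i<k. M i (p i))" by simp
  qed
  finally show ?thesis unfolding ldet_def by simp
qed

lemma bij_betw_enum_set:
  assumes "finite S"
  shows "bij_betw (enum_set S) {..<card S} S"
proof -
  have "\<exists>f. bij_betw f {..<card S} S"
    using ex_bij_betw_nat_finite[OF assms] by (simp add: atLeast0LessThan)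
  then show ?thesis unfolding enum_set_def by (rule someI_ex)
qed

definition col_enum :: "nat \<Rightarrow> 'n::finite" where
  "col_enum = enum_set UNIV"

definition col_index :: "'n::finite \<Rightarrow> nat" where
  "col_index = inv_into {..<CARD('n)} col_enum"

lemma bij_betw_col_enum: "bij_betw (col_enum :: nat \<Rightarrow> 'n::finite) {..<CARD('n)} UNIV"
  unfolding col_enum_def by (rule bij_betw_enum_set) simp

lemma col_index_less [simp]: "col_index (k::'n::finite) < CARD('n)"
  using bij_betw_col_enum[where 'n='n] unfolding col_index_def
  by (metis UNIV_I bij_betw_def inv_into_into lessThan_iff)

lemma col_enum_col_index [simp]: "col_enum (col_index (k::'n::finite)) = k"
  using bij_betw_col_enum[where 'n='n] unfolding col_index_def
  by (simp add: bij_betw_def f_inv_into_f)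

lemma col_index_col_enum [simp]: "j < CARD('n::finite) \<Longrightarrow> col_index (col_enum j :: 'n) = j"
  using bij_betw_col_enum[where 'n='n] unfolding col_index_def
  by (simp add: bij_betw_def)

lemma col_enum_eq_iff:
  "i < CARD('n::finite) \<Longrightarrow> j < CARD('n) \<Longrightarrow> (col_enum i :: 'n) = col_enum j \<longleftrightarrow> i = j"
  by (metis col_index_col_enum)

lemma sum_col_enum: "(\<Sum>j<CARD('n::finite). f (col_enum j :: 'n)) = (\<Sum>k\<in>UNIV. f k)"
  using sum.reindex_bij_betw[OF bij_betw_col_enum[where 'n='n], of f] by simp

definition rows_mat :: "(int^'n::finite) list \<Rightarrow> int mat" where
  "rows_mat rs = mat CARD('n) CARD('n) (\<lambda>(i,j). rs ! i $ col_enum j)"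

definition det_rows :: "(int^'n::finite) list \<Rightarrow> int" where
  "det_rows rs = det (rows_mat rs)"

definition cofactor_vec :: "(int^'n::finite) list \<Rightarrow> nat \<Rightarrow> int^'n" where
  "cofactor_vec rs i = (\<chi> k. cofactor (rows_mat rs) i (col_index k))"

lemma rows_mat_carrier [simp]: "rows_mat (rs::(int^'n::finite) list) \<in> carrier_mat CARD('n) CARD('n)"
  unfolding rows_mat_def by simp

lemma abs_det_rows_mset_eq:
  fixes rs :: "(int^'n::finite) list"
  assumes len: "length rs = CARD('n)" and ms: "mset rs' = mset rs"
  shows "\<bar>det_rows rs'\<bar> = \<bar>det_rows rs\<bar>"
proof -
  obtain p where p: "p permutes {..<length rs}" and pl: "permute_list p rs = rs'"
    using mset_eq_permutation[OF ms] by blast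
  have p': "p permutes {0..<CARD('n)}" using p len by (simp add: atLeast0LessThan)
  have "rows_mat rs' = mat CARD('n) CARD('n) (\<lambda>(i,j). rows_mat rs $$ (p i, j))"
  proof (rule eq_matI)
    fix i j assume "i < dim_row (mat CARD('n) CARD('n) (\<lambda>(i,j). rows_mat rs $$ (p i, j)))"
      "j < dim_col (mat CARD('n) CARD('n) (\<lambda>(i,j). rows_mat rs $$ (p i, j)))"
    then have i: "i < CARD('n)" and j: "j < CARD('n)" by auto
    have "p i < CARD('n)" using permutes_in_image[OF p] i len by simp
    moreover have "rs' ! i = rs ! p i" unfolding pl[symmetric] permute_list_def using i len by simp
    ultimately show "rows_mat rs' $$ (i, j) = mat CARD('n) CARD('n) (\<lambda>(i,j). rows_mat rs $$ (p i, j)) $$ (i, j)"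
      using i j by (simp add: rows_mat_def)
  qed (simp_all add: rows_mat_def)
  then have "det_rows rs' = signof p * det_rows rs"
    unfolding det_rows_def using det_permute_rows[OF rows_mat_carrier p'] by simp
  then show ?thesis by (simp add: abs_mult sign_def)
qed

lemma det_rows_update:
  fixes rs :: "(int^'n::finite) list"
  assumes len: "length rs = CARD('n)" and i: "i < CARD('n)"
  shows "det_rows (rs[i := y]) = int_inner (cofactor_vec rs i) y"
proof -
  have md: "mat_delete (rows_mat (rs[i := y])) i j = mat_delete (rows_mat rs) i j" for j
    unfolding mat_delete_def rows_mat_def using len i
    by (intro eq_matI) (auto simp: nth_list_update)
  have "det_rows (rs[i := y]) =
      (\<Sum>j<CARD('n). rows_mat (rs[i := y]) $$ (i,j) * cofactor (rows_mat (rs[i := y])) i j)"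
    unfolding det_rows_def by (rule laplace_expansion_row[OF rows_mat_carrier i])
  also have "\<dots> = (\<Sum>j<CARD('n). y $ col_enum j * cofactor (rows_mat rs) i j)"
  proof (intro sum.cong refl)
    fix j
    have "rows_mat (rs[i := y]) $$ (i,j) = y $ col_enum j" if "j < CARD('n)"
      using len i that by (simp add: rows_mat_def)
    then show "rows_mat (rs[i := y]) $$ (i,j) * cofactor (rows_mat (rs[i := y])) i j
        = y $ col_enum j * cofactor (rows_mat rs) i j" if "j \<in> {..<CARD('n)}"
      using that unfolding cofactor_def md by simp
  qed
  also have "\<dots> = (\<Sum>k\<in>UNIV. y $ k * cofactor (rows_mat rs) i (col_index k))"
    by (subst sum_col_enum[symmetric]) (auto intro!: sum.cong)
  also have "\<dots> = int_inner (cofactor_vec rs i) y"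
    unfolding int_inner_def cofactor_vec_def by (simp add: mult.commute)
  finally show ?thesis .
qed

lemma det_rows_linear_factor:
  fixes xs zs :: "(int^'n::finite) list"
  assumes len: "Suc (length xs + length zs) = CARD('n)" and G: "G \<noteq> 0"
    and dvd: "\<And>y. G dvd det_rows (xs @ y # zs)"
  obtains w where "\<And>y. det_rows (xs @ y # zs) = G * int_inner w y"
proof -
  let ?rs = "xs @ 0 # zs" and ?i = "length xs"
  have upd: "?rs[?i := y] = xs @ y # zs" for y by (simp add: list_update_append)
  have form: "det_rows (xs @ y # zs) = int_inner (cofactor_vec ?rs ?i) y" for y
    using det_rows_update[of ?rs ?i y] len unfolding upd by simp
  define w where "w = (\<chi> k. cofactor_vec ?rs ?i $ k div G)"
  have "cofactor_vec ?rs ?i $ k = G * w $ k" for k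
    using dvd[of "axis k 1"] unfolding form int_inner_axis w_def by simp
  then have "cofactor_vec ?rs ?i = G *s w" by (simp add: Finite_Cartesian_Product.vec_eq_iff)
  then show ?thesis by (intro that[of w]) (simp add: form int_inner_scale_left)
qed

lemma det_rows_eq_rows_zero:
  fixes rs :: "(int^'n::finite) list"
  assumes "length rs = CARD('n)" "i < CARD('n)" "j < CARD('n)" "i \<noteq> j" "rs ! i = rs ! j"
  shows "det_rows rs = 0"
  unfolding det_rows_def
  by (rule det_identical_rows[OF rows_mat_carrier assms(4,2,3)])
    (use assms in \<open>auto simp: rows_mat_def intro!: eq_vecI\<close>)

lemma det_rows_append_common_row:
  fixes xs ys :: "(int^'n::finite) list"
  assumes "length (xs @ ys) = CARD('n)" "x \<in> set xs" "x \<in> set ys"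
  shows "det_rows (xs @ ys) = 0"
proof -
  obtain i j where "i < length xs" "xs ! i = x" "j < length ys" "ys ! j = x"
    using assms(2,3) by (auto simp: in_set_conv_nth)
  then show ?thesis
    by (intro det_rows_eq_rows_zero[OF assms(1), of i "length xs + j"])
      (use assms(1) in \<open>auto simp: nth_append\<close>)
qed

lemma det_rows_zero_imp_combination:
  fixes rs :: "(int^'n::finite) list"
  assumes len: "length rs = CARD('n)" and det0: "det_rows rs = 0"
  obtains c i where "i < CARD('n)" "c i \<noteq> 0" "(\<Sum>j<CARD('n). c j *\<^sub>R realV (rs ! j)) = 0"
proof -
  let ?n = "CARD('n)"
  let ?R = "map_mat real_of_int (rows_mat rs)"
  have R: "?R \<in> carrier_mat ?n ?n" by simp
  have "det (transpose_mat ?R) = 0" using det0 det_transpose[OF R] unfolding det_rows_def by simp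
  then obtain c where c: "c \<in> carrier_vec ?n" "c \<noteq> 0\<^sub>v ?n" "transpose_mat ?R *\<^sub>v c = 0\<^sub>v ?n"
    using det_0_iff_vec_prod_zero_field[of "transpose_mat ?R" ?n] R by auto
  have "(\<Sum>j<?n. vec_index c j *\<^sub>R realV (rs ! j)) = 0"
  proof (rule Finite_Cartesian_Product.vec_eq_iff[THEN iffD2], rule allI)
    fix k :: 'n
    have "vec_index (transpose_mat ?R *\<^sub>v c) (col_index k) = 0" unfolding c(3) by simp
    moreover have "vec_index (transpose_mat ?R *\<^sub>v c) (col_index k)
        = (\<Sum>i<?n. real_of_int (rs ! i $ k) * vec_index c i)"
      using c(1) len by (simp add: scalar_prod_def rows_mat_def atLeast0LessThan)
    ultimately show "(\<Sum>j<?n. vec_index c j *\<^sub>R realV (rs ! j)) $ k = 0 $ k"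
      by (simp add: sum_component mult.commute)
  qed
  moreover have "\<exists>i<?n. vec_index c i \<noteq> 0"
  proof (rule ccontr)
    assume "\<not> ?thesis"
    then have "c = 0\<^sub>v ?n" using c(1) by (intro eq_vecI) auto
    with c(2) show False by simp
  qed
  ultimately show ?thesis using that by blast
qed

lemma det_rows_nonzero_if_independent:
  fixes rs :: "(int^'n::finite) list"
  assumes len: "length rs = CARD('n)" and dist: "distinct rs"
    and ind: "independent (realV ` set rs)"
  shows "det_rows rs \<noteq> 0"
proof
  let ?n = "CARD('n)"
  assume "det_rows rs = 0"
  then obtain c i where i: "i < ?n" "c i \<noteq> 0" and comb: "(\<Sum>j<?n. c j *\<^sub>R realV (rs ! j)) = 0"
    using det_rows_zero_imp_combination[OF len] by blast
  have "inj_on (\<lambda>i. realV (rs ! i)) {..<?n}"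
  proof (rule inj_onI)
    fix x y assume xy: "x \<in> {..<?n}" "y \<in> {..<?n}" and eq: "realV (rs ! x) = realV (rs ! y)"
    from eq have "rs ! x = rs ! y" by (rule injD[OF inj_realV])
    with xy show "x = y" using dist len by (simp add: nth_eq_iff_index_eq)
  qed
  moreover have "(\<lambda>i. realV (rs ! i)) ` {..<?n} = realV ` set rs"
    using len by (auto simp: set_conv_nth)
  ultimately have bij: "bij_betw (\<lambda>i. realV (rs ! i)) {..<?n} (realV ` set rs)"
    unfolding bij_betw_def by blast
  define u where "u x = c (inv_into {..<?n} (\<lambda>i. realV (rs ! i)) x)" for x
  have "(\<Sum>x\<in>realV ` set rs. u x *\<^sub>R x) = (\<Sum>j<?n. u (realV (rs ! j)) *\<^sub>R realV (rs ! j))"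
    using sum.reindex_bij_betw[OF bij, of "\<lambda>x. u x *\<^sub>R x"] by simp
  also have "\<dots> = 0"
    unfolding u_def using bij_betw_inv_into_left[OF bij] comb by simp
  finally have "(\<Sum>x\<in>realV ` set rs. u x *\<^sub>R x) = 0" .
  moreover have "u (realV (rs ! i)) \<noteq> 0" "realV (rs ! i) \<in> realV ` set rs"
    using i len bij_betw_inv_into_left[OF bij] by (auto simp: u_def)
  ultimately have "dependent (realV ` set rs)"
    by (subst real_vector.dependent_finite) (auto intro!: exI[of _ u])
  with ind show False by simp
qed

lemma independent_rows_extend_det_nonzero:
  fixes xs :: "(int^'n::finite) list"
  assumes dist: "distinct xs" and ind: "independent (realV ` set xs)"
  obtains ys where "length (xs @ ys) = CARD('n)" "det_rows (xs @ ys) \<noteq> 0"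
proof -
  let ?S = "realV ` set xs"
  obtain B where B: "?S \<subseteq> B" "B \<subseteq> ?S \<union> Basis" "independent B" "?S \<union> Basis \<subseteq> span B"
    using maximal_independent_subset_extend[of ?S "?S \<union> Basis"] ind by blast
  have "span B = UNIV"
    using B(4) span_Basis span_mono[of Basis "span B"] by (auto simp: span_span)
  then have card_B: "card B = CARD('n)"
    using dim_eq_card_independent[OF B(3)] dim_span[of B] by (simp add: dim_UNIV)
  have "finite ((\<lambda>k. axis k (1::int)) ` {k. axis k (1::real) \<in> B - ?S})" by simp
  then obtain ys where ys: "distinct ys"
    "set ys = (\<lambda>k. axis k (1::int)) ` {k. axis k (1::real) \<in> B - ?S}"
    using finite_distinct_list by blast
  have "B - ?S \<subseteq> range (\<lambda>k. axis k 1)"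
    using B(2) by (auto simp: Basis_vec_def)
  then have image_ys: "realV ` set ys = B - ?S"
    unfolding ys(2) image_image realV_axis by auto
  then have image: "realV ` set (xs @ ys) = B" using B(1) by auto
  have "realV ` set xs \<inter> realV ` set ys = {}" using image_ys by auto
  then have dist': "distinct (xs @ ys)" using dist ys(1) by auto
  have "length (xs @ ys) = card (set (xs @ ys))" using distinct_card[OF dist'] by simp
  also have "\<dots> = card (realV ` set (xs @ ys))"
    by (rule card_image[symmetric]) (rule inj_on_subset[OF inj_realV subset_UNIV])
  finally have len: "length (xs @ ys) = CARD('n)" using image card_B by simp
  show ?thesis
    by (rule that[OF len det_rows_nonzero_if_independent[OF len dist']]) (use image B(3) in simp)
qed

lemma independent_rows_extend_one_det_nonzero:
  fixes xs :: "(int^'n::finite) list"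
  assumes len: "length xs + 1 = CARD('n)" and dist: "distinct xs"
    and ind: "independent (realV ` set xs)"
  obtains y where "det_rows (xs @ [y]) \<noteq> 0"
proof -
  obtain ys where ys: "length (xs @ ys) = CARD('n)" "det_rows (xs @ ys) \<noteq> 0"
    using independent_rows_extend_det_nonzero[OF dist ind] by blast
  then have "length ys = 1" using len by simp
  then obtain y where "ys = [y]" by (metis One_nat_def length_0_conv length_Suc_conv)
  with ys(2) show ?thesis using that by blast
qed

section \<open>Minors of A_I and the bound \<Delta>\<close>

lemma dvd_det_if_dvd_top_minors:
  fixes G :: int
  assumes "B \<in> carrier_mat (t + d) (t + d)"
    and "\<And>f. inj_on f {..<t} \<Longrightarrow> f ` {..<t} \<subseteq> {..<t + d} \<Longrightarrow>
      G dvd det (mat t t (\<lambda>(i,j). B $$ (i, f j)))"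
  shows "G dvd det B"
  using assms
proof (induction d arbitrary: B)
  case 0
  have "mat t t (\<lambda>(i,j). B $$ (i, id j)) = B" using 0(1) by (intro eq_matI) auto
  then show ?case using 0(2)[of id] by simp
next
  case (Suc d)
  let ?k = "t + d"
  have B: "B \<in> carrier_mat (Suc ?k) (Suc ?k)" using Suc(2) by simp
  have laplace: "det B = (\<Sum>j<Suc ?k. B $$ (?k,j) * cofactor B ?k j)"
    by (rule laplace_expansion_row[OF B]) simp
  have "G dvd det (mat_delete B ?k j)" if j: "j < Suc ?k" for j
  proof (rule Suc.IH)
    show "mat_delete B ?k j \<in> carrier_mat (t + d) (t + d)" using mat_delete_carrier[OF B] by simp
  next
    fix f assume f: "inj_on f {..<t}" "f ` {..<t} \<subseteq> {..<t + d}"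
    define f' where "f' x = (if f x < j then f x else Suc (f x))" for x
    have "inj_on f' {..<t}" using f(1) unfolding f'_def inj_on_def by auto
    moreover have "f' ` {..<t} \<subseteq> {..<t + Suc d}" using f(2) unfolding f'_def by auto
    ultimately have "G dvd det (mat t t (\<lambda>(i,j). B $$ (i, f' j)))" by (rule Suc.prems(2))
    moreover have "mat t t (\<lambda>(i,j'). mat_delete B ?k j $$ (i, f j')) = mat t t (\<lambda>(i,j). B $$ (i, f' j))"
    proof (rule eq_matI)
      fix i j' assume "i < dim_row (mat t t (\<lambda>(i,j). B $$ (i, f' j)))"
        "j' < dim_col (mat t t (\<lambda>(i,j). B $$ (i, f' j)))"
      then have ij: "i < t" "j' < t" by auto
      then have "f j' < t + d" using f(2) by auto
      then show "mat t t (\<lambda>(i,j'). mat_delete B ?k j $$ (i, f j')) $$ (i, j')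
          = mat t t (\<lambda>(i,j). B $$ (i, f' j)) $$ (i, j')"
        using ij B unfolding mat_delete_def f'_def by auto
    qed auto
    ultimately show "G dvd det (mat t t (\<lambda>(i,j'). mat_delete B ?k j $$ (i, f j')))" by simp
  qed
  then show ?case unfolding laplace cofactor_def by (intro dvd_sum) auto
qed

lemma det_permute_cols:
  assumes X: "X \<in> carrier_mat t t" and p: "p permutes {0..<t}"
  shows "det (mat t t (\<lambda>(i,j). X $$ (i, p j))) = signof p * det X"
proof -
  have XT: "transpose_mat X \<in> carrier_mat t t" using X by simp
  have "mat t t (\<lambda>(i,j). X $$ (i, p j)) = transpose_mat (mat t t (\<lambda>(i,j). transpose_mat X $$ (p i, j)))"
    using X permutes_in_image[OF p] by (intro eq_matI) auto
  then have "det (mat t t (\<lambda>(i,j). X $$ (i, p j))) = det (mat t t (\<lambda>(i,j). transpose_mat X $$ (p i, j)))"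
    by (metis det_transpose mat_carrier)
  also have "\<dots> = signof p * det (transpose_mat X)" by (rule det_permute_rows[OF XT p])
  also have "\<dots> = signof p * det X" using det_transpose[OF X] by simp
  finally show ?thesis .
qed

definition rows_of :: "int^'n^'m \<Rightarrow> 'm set \<Rightarrow> (int^'n) list" where
  "rows_of A S = map (\<lambda>i. A $ enum_set S i) [0..<card S]"

lemma length_rows_of [simp]: "length (rows_of A S) = card S"
  unfolding rows_of_def by simp

lemma nth_rows_of [simp]: "i < card S \<Longrightarrow> rows_of A S ! i = A $ enum_set S i"
  unfolding rows_of_def by simp

lemma set_rows_of: "set (rows_of A (S::'m::finite set)) = ($) A ` S"
proof -
  have "set (rows_of A S) = ($) A ` enum_set S ` {0..<card S}"
    unfolding rows_of_def by (simp add: image_image)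
  also have "enum_set S ` {0..<card S} = S"
    using bij_betw_enum_set[of S] by (simp add: bij_betw_def atLeast0LessThan)
  finally show ?thesis .
qed

lemma distinct_rows_of:
  assumes "inj_on (($) A) (S::'m::finite set)"
  shows "distinct (rows_of A S)"
proof -
  have "inj_on (($) A \<circ> enum_set S) {0..<card S}"
    using bij_betw_enum_set[of S] assms unfolding bij_betw_def atLeast0LessThan
    by (intro comp_inj_on) auto
  then show ?thesis unfolding rows_of_def by (simp add: distinct_map comp_def)
qed

lemma mset_rows_of_eq:
  assumes "inj_on (($) A) (S::'m::finite set)" "distinct xs" "set xs = ($) A ` S"
  shows "mset xs = mset (rows_of A S)"
  using set_eq_iff_mset_eq_distinct[OF assms(2) distinct_rows_of[OF assms(1)]] assms(3)
  by (simp add: set_rows_of)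

abbreviation real_row :: "int^'n::finite^'m::finite \<Rightarrow> 'm \<Rightarrow> real^'n" where
  "real_row A i \<equiv> realV (A $ i)"

lemma inj_on_real_row_iff: "inj_on (real_row A) S \<longleftrightarrow> inj_on (($) A) S"
  using inj_realV by (auto simp: inj_on_def dest: injD)

lemma row_realM: "Finite_Cartesian_Product.row i (realM A) = real_row A i"
  by (simp add: Finite_Cartesian_Product.row_def realM_def realV_def)

lemma polyP_iff: "x \<in> polyP A b \<longleftrightarrow> (\<forall>i. real_row A i \<bullet> x \<le> real_of_int (b $ i))"
  unfolding polyP_def row_realM by simp

lemma kerRows_iff: "x \<in> kerRows A I \<longleftrightarrow> (\<forall>i\<in>I. real_row A i \<bullet> x = 0)"
  unfolding kerRows_def row_realM by simp

lemma faceP_iff: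
  "x \<in> faceP A b I \<longleftrightarrow> (\<forall>i. real_row A i \<bullet> x \<le> real_of_int (b $ i)) \<and> (\<forall>i\<in>I. real_row A i \<bullet> x = 0)"
  unfolding faceP_def Int_iff polyP_iff kerRows_iff ..

lemma rankRows_eq_dim: "rankRows A I = dim (real_row A ` I)"
  unfolding rankRows_def row_realM ..

lemma admissible_inj_independent:
  fixes A :: "int^'n::finite^'m::finite"
  assumes "admissible A I"
  shows "inj_on (($) A) I" "independent (real_row A ` I)"
proof -
  have dim: "dim (real_row A ` I) = card I"
    using assms unfolding admissible_def rankRows_eq_dim by simp
  have "dim (real_row A ` I) \<le> card (real_row A ` I)" by (rule dim_le_card) (auto intro: span_base)
  moreover have "card (real_row A ` I) \<le> card I" by (rule card_image_le) simp
  ultimately have card_rows: "card (real_row A ` I) = card I" using dim by simp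
  have "inj_on (real_row A) I" using eq_card_imp_inj_on[OF _ card_rows] by simp
  then show "inj_on (($) A) I" by (simp add: inj_on_real_row_iff)
  show "independent (real_row A ` I)"
    by (rule card_le_dim_spanning[of _ "real_row A ` I"])
      (use card_rows dim in \<open>auto intro: span_base\<close>)
qed

lemma permutes_enum_set_comp:
  assumes h: "bij_betw h {..<card C} C" and C: "finite C"
  obtains p where "p permutes {0..<card C}" "\<And>j. j < card C \<Longrightarrow> enum_set C (p j) = h j"
proof -
  let ?t = "card C"
  have bij_C: "bij_betw (enum_set C) {..<?t} C" by (rule bij_betw_enum_set[OF C])
  define p where "p j = (if j < ?t then inv_into {..<?t} (enum_set C) (h j) else j)" for j
  have "bij_betw (inv_into {..<?t} (enum_set C) \<circ> h) {..<?t} {..<?t}"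
    by (rule bij_betw_trans[OF h bij_betw_inv_into[OF bij_C]])
  then have "bij_betw p {..<?t} {..<?t}" unfolding p_def by (rule bij_betw_cong[THEN iffD1, rotated]) auto
  then have "p permutes {0..<?t}"
    unfolding atLeast0LessThan by (intro bij_imp_permutes) (auto simp: p_def)
  moreover have "enum_set C (p j) = h j" if "j < ?t" for j
  proof -
    have "h j \<in> enum_set C ` {..<?t}" using that h bij_C by (auto simp: bij_betw_def)
    then show ?thesis using that unfolding p_def by (simp add: f_inv_into_f)
  qed
  ultimately show ?thesis by (rule that)
qed

lemma abs_det_top_minor_rows_of:
  fixes A :: "int^'n::finite^'m::finite"
  assumes len: "length (rows_of A I @ ys) = CARD('n)"
    and f: "inj_on f {..<card I}" "f ` {..<card I} \<subseteq> {..<CARD('n)}"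
  defines "C \<equiv> ((col_enum :: nat \<Rightarrow> 'n) \<circ> f) ` {..<card I}"
  shows "card C = card I"
    and "\<bar>det (mat (card I) (card I) (\<lambda>(i,j). rows_mat (rows_of A I @ ys) $$ (i, f j)))\<bar>
      = absMinor A I C"
proof -
  let ?rs = "rows_of A I @ ys" and ?t = "card I" and ?n = "CARD('n)"
  have inj: "inj_on ((col_enum :: nat \<Rightarrow> 'n) \<circ> f) {..<?t}"
  proof (rule inj_onI)
    fix x y assume xy: "x \<in> {..<?t}" "y \<in> {..<?t}" "(col_enum \<circ> f) x = ((col_enum :: nat \<Rightarrow> 'n) \<circ> f) y"
    then have "f x < ?n" "f y < ?n" using f(2) by auto
    then have "f x = f y" using xy(3) col_enum_eq_iff[where 'n='n] by auto
    then show "x = y" using f(1) xy(1,2) by (auto simp: inj_on_def)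
  qed
  then show card_C: "card C = ?t" unfolding C_def using card_image[OF inj] by simp
  have "bij_betw (col_enum \<circ> f) {..<card C} C" using inj card_C unfolding C_def bij_betw_def by simp
  then obtain p where p: "p permutes {0..<?t}" and enum_p: "\<And>j. j < ?t \<Longrightarrow> enum_set C (p j) = col_enum (f j)"
    using permutes_enum_set_comp[of "col_enum \<circ> f" C] card_C by auto
  define X where "X = mat ?t ?t (\<lambda>(i,j). A $ enum_set I i $ enum_set C j)"
  have X: "X \<in> carrier_mat ?t ?t" unfolding X_def by simp
  have "mat ?t ?t (\<lambda>(i,j). rows_mat ?rs $$ (i, f j)) = mat ?t ?t (\<lambda>(i,j). X $$ (i, p j))"
  proof (rule eq_matI)
    fix i j assume "i < dim_row (mat ?t ?t (\<lambda>(i,j). X $$ (i, p j)))"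
      "j < dim_col (mat ?t ?t (\<lambda>(i,j). X $$ (i, p j)))"
    then have ij: "i < ?t" "j < ?t" by auto
    have "p j < ?t" using permutes_in_image[OF p] ij by simp
    moreover have "f j < ?n" using f(2) ij by auto
    moreover have "i < ?n" using ij len by simp
    ultimately show "mat ?t ?t (\<lambda>(i,j). rows_mat ?rs $$ (i, f j)) $$ (i, j)
        = mat ?t ?t (\<lambda>(i,j). X $$ (i, p j)) $$ (i, j)"
      using ij enum_p[of j] unfolding X_def rows_mat_def by (simp add: nth_append)
  qed auto
  then show "\<bar>det (mat ?t ?t (\<lambda>(i,j). rows_mat ?rs $$ (i, f j)))\<bar> = absMinor A I C"
    using det_permute_cols[OF X p]
    unfolding absMinor_def X_def ldet_eq_det by (simp add: abs_mult sign_def)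
qed

lemma gcdRows_dvd_det_rows:
  fixes A :: "int^'n::finite^'m::finite"
  assumes adm: "admissible A I" and len: "length (rows_of A I @ ys) = CARD('n)"
  shows "gcdRows A I dvd det_rows (rows_of A I @ ys)"
proof -
  let ?rs = "rows_of A I @ ys" and ?t = "card I" and ?n = "CARD('n)"
  have tn: "?t \<le> ?n" using len by simp
  have "rows_mat ?rs \<in> carrier_mat (?t + (?n - ?t)) (?t + (?n - ?t))" using tn by simp
  then show ?thesis unfolding det_rows_def
  proof (rule dvd_det_if_dvd_top_minors)
    fix f assume f: "inj_on f {..<?t}" "f ` {..<?t} \<subseteq> {..<?t + (?n - ?t)}"
    then have "f ` {..<?t} \<subseteq> {..<?n}" using tn by simp
    note minor = abs_det_top_minor_rows_of[OF len f(1) this]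
    let ?C = "((col_enum :: nat \<Rightarrow> 'n) \<circ> f) ` {..<?t}"
    have "absMinor A I ?C \<in> {absMinor A R C | R C. R \<subseteq> I \<and> card R = rankRows A I
        \<and> card C = rankRows A I}"
      using minor(1) adm unfolding admissible_def by (intro CollectI exI[of _ I] exI[of _ ?C]) simp
    then have "gcdRows A I dvd absMinor A I ?C" unfolding gcdRows_def by (rule Gcd_dvd)
    then show "gcdRows A I dvd det (mat ?t ?t (\<lambda>(i,j). rows_mat ?rs $$ (i, f j)))"
      using minor(2) by (metis dvd_abs_iff)
  qed
qed

lemma gcdRows_pos:
  fixes A :: "int^'n::finite^'m::finite"
  assumes adm: "admissible A I"
  shows "gcdRows A I > 0"
proof -
  note inj_indep = admissible_inj_independent[OF adm]
  obtain ys where ys: "length (rows_of A I @ ys) = CARD('n)" "det_rows (rows_of A I @ ys) \<noteq> 0"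
    by (rule independent_rows_extend_det_nonzero[of "rows_of A I"])
      (use distinct_rows_of[OF inj_indep(1)] inj_indep(2) in \<open>auto simp: set_rows_of image_image\<close>)
  have "gcdRows A I dvd det_rows (rows_of A I @ ys)" by (rule gcdRows_dvd_det_rows[OF adm ys(1)])
  then have "gcdRows A I \<noteq> 0" using ys(2) by auto
  moreover have "gcdRows A I \<ge> 0" unfolding gcdRows_def by simp
  ultimately show ?thesis by simp
qed

lemma absDetAlphaRows_eq_det_rows:
  fixes A :: "int^'n::finite^'m::finite"
  assumes "card K + 1 = CARD('n)"
  shows "absDetAlphaRows \<beta> A K = \<bar>det_rows (\<beta> # rows_of A K)\<bar>"
proof -
  have "mat CARD('n) CARD('n) (\<lambda>(i,j). if i = 0 then \<beta> $ col_enum j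
      else A $ enum_set K (i - 1) $ col_enum j) = rows_mat (\<beta> # rows_of A K)"
    unfolding rows_mat_def using assms by (intro eq_matI) (auto simp: nth_Cons')
  then show ?thesis unfolding absDetAlphaRows_def ldet_eq_det det_rows_def col_enum_def by simp
qed

lemma abs_det_rows_le_DeltaI:
  fixes A :: "int^'n::finite^'m::finite"
  assumes adm: "admissible A I" and IK: "I \<subseteq> K" and card_K: "card K + 1 = CARD('n)"
    and inj: "inj_on (($) A) K" and dist: "distinct xs" and set_xs: "set xs = ($) A ` K"
  shows "real_of_int \<bar>det_rows (xs @ [\<beta>])\<bar> \<le> real_of_int (gcdRows A I) * DeltaI \<beta> A I"
proof -
  let ?S = "{absDetAlphaRows \<beta> A K | K. I \<subseteq> K \<and> card K = CARD('n) - 1}"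
  have "mset (xs @ [\<beta>]) = mset (\<beta> # rows_of A K)"
    using mset_rows_of_eq[OF inj dist set_xs] by simp
  then have "\<bar>det_rows (xs @ [\<beta>])\<bar> = \<bar>det_rows (\<beta> # rows_of A K)\<bar>"
    by (rule abs_det_rows_mset_eq[rotated]) (use card_K in simp)
  also have "\<dots> = absDetAlphaRows \<beta> A K" by (rule absDetAlphaRows_eq_det_rows[OF card_K, symmetric])
  finally have "\<bar>det_rows (xs @ [\<beta>])\<bar> = absDetAlphaRows \<beta> A K" .
  moreover have "absDetAlphaRows \<beta> A K \<le> Max ?S"
  proof (rule Max_ge)
    show "finite ?S" by (rule finite_subset[of _ "range (absDetAlphaRows \<beta> A)"]) auto
    show "absDetAlphaRows \<beta> A K \<in> ?S" using IK card_K by force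
  qed
  ultimately have "real_of_int \<bar>det_rows (xs @ [\<beta>])\<bar> \<le> real_of_int (Max ?S)" by simp
  also have "\<dots> = real_of_int (gcdRows A I) * DeltaI \<beta> A I"
    unfolding DeltaI_def using gcdRows_pos[OF adm] by simp
  finally show ?thesis .
qed

section \<open>The faces P_I and their linear hulls\<close>

lemma subspace_kerRows: "subspace (kerRows A K)"
  unfolding subspace_def by (auto simp: kerRows_iff inner_add_right)

lemma zero_in_faceP: "(\<And>i. 0 \<le> b $ i) \<Longrightarrow> 0 \<in> faceP A b I"
  unfolding faceP_iff by simp

lemma scaleR_in_polyP:
  assumes "\<And>i. 0 \<le> b $ i" "v \<in> polyP A b" "0 \<le> s" "s \<le> 1"
  shows "s *\<^sub>R v \<in> polyP A b"
  unfolding polyP_iff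
proof
  fix i
  have "s * (real_row A i \<bullet> v) \<le> s * real_of_int (b $ i)"
    using assms(2,3) unfolding polyP_iff by (intro mult_left_mono) auto
  also have "\<dots> \<le> real_of_int (b $ i)" using assms(1)[of i] assms(3,4) by (simp add: mult_left_le_one_le)
  finally show "real_row A i \<bullet> (s *\<^sub>R v) \<le> real_of_int (b $ i)" by simp
qed

lemma inner_eq_zero_if_kerRows_span:
  assumes "x \<in> kerRows A K" "a \<in> span (real_row A ` K)"
  shows "a \<bullet> x = 0"
proof -
  have "orthogonal x a"
    by (rule orthogonal_to_span[OF assms(2)])
      (use assms(1) in \<open>auto simp: kerRows_iff Linear_Algebra.orthogonal_def inner_commute\<close>)
  then show ?thesis by (simp add: Linear_Algebra.orthogonal_def inner_commute)
qed

lemma kerRows_eq_if_span: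
  assumes "real_row A ` E \<subseteq> span (real_row A ` K)" "K \<subseteq> E"
  shows "kerRows A K = kerRows A E"
proof
  show "kerRows A E \<subseteq> kerRows A K" using assms(2) unfolding kerRows_iff subset_iff by blast
  show "kerRows A K \<subseteq> kerRows A E"
    using assms(1) inner_eq_zero_if_kerRows_span by (fastforce simp: kerRows_iff)
qed

lemma dim_kerRows_add_dim_rows:
  fixes A :: "int^'n::finite^'m::finite"
  shows "dim (kerRows A E) + dim (real_row A ` E) = CARD('n)"
proof -
  have "kerRows A E = {y. \<forall>x\<in>span (real_row A ` E). orthogonal x y}"
  proof (rule Set.set_eqI, rule iffI)
    fix y assume "y \<in> kerRows A E"
    then show "y \<in> {y. \<forall>x\<in>span (real_row A ` E). orthogonal x y}"
      using inner_eq_zero_if_kerRows_span by (auto simp: Linear_Algebra.orthogonal_def)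
  next
    fix y assume y: "y \<in> {y. \<forall>x\<in>span (real_row A ` E). orthogonal x y}"
    show "y \<in> kerRows A E" unfolding kerRows_iff
    proof
      fix i assume "i \<in> E"
      then have "real_row A i \<in> span (real_row A ` E)" by (intro span_base imageI)
      with y show "real_row A i \<bullet> y = 0" by (simp add: Linear_Algebra.orthogonal_def)
    qed
  qed
  moreover have "dim {y. \<forall>x\<in>span (real_row A ` E). orthogonal x y} + dim (span (real_row A ` E))
      = dim (UNIV :: (real^'n) set)"
    using dim_subspace_orthogonal_to_vectors[of "span (real_row A ` E)" UNIV] by simp
  ultimately show ?thesis by simp
qed

lemma real_row_nonzero_if_full_rank:
  fixes A :: "int^'n::finite^'m::finite"
  assumes "rank (realM A) = CARD('n)" "x \<noteq> 0"
  obtains i where "real_row A i \<bullet> x \<noteq> 0"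
proof -
  have "(realM A *v x) $ i = real_row A i \<bullet> x" for i
    by (simp add: matrix_vector_mult_def inner_vec_def realM_def realV_def mult.commute)
  moreover have "realM A *v x \<noteq> realM A *v 0"
    using assms full_rank_injective[of "realM A"] by (metis injD)
  ultimately show ?thesis using that by (auto simp: Finite_Cartesian_Product.vec_eq_iff)
qed

lemma max_abs_row_inner:
  fixes A :: "int^'n::finite^'m::finite"
  assumes rank: "rank (realM A) = CARD('n)" and g: "g \<noteq> 0"
  obtains i1 where "1 \<le> \<bar>int_inner (A $ i1) g\<bar>" "\<And>i. \<bar>int_inner (A $ i) g\<bar> \<le> \<bar>int_inner (A $ i1) g\<bar>"
proof -
  let ?N = "Max (range (\<lambda>i. \<bar>int_inner (A $ i) g\<bar>))"
  have "?N \<in> range (\<lambda>i. \<bar>int_inner (A $ i) g\<bar>)" by (rule Max_in) auto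
  then obtain i1 where i1: "?N = \<bar>int_inner (A $ i1) g\<bar>" by blast
  have le: "\<bar>int_inner (A $ i) g\<bar> \<le> ?N" for i by (rule Max_ge) auto
  have "realV g \<noteq> 0" using g by simp
  then obtain i0 where "real_row A i0 \<bullet> realV g \<noteq> 0"
    by (rule real_row_nonzero_if_full_rank[OF rank])
  then have "int_inner (A $ i0) g \<noteq> 0" by (simp add: realV_inner)
  then have "1 \<le> ?N" using le[of i0] by linarith
  then show ?thesis using le unfolding i1 by (rule that)
qed

definition implicit_rows :: "int^'n::finite^'m::finite \<Rightarrow> int^'m \<Rightarrow> 'm set \<Rightarrow> 'm set" where
  "implicit_rows A b I = {k. \<forall>x\<in>faceP A b I. real_row A k \<bullet> x = 0}"

lemma faceP_eq_Inter:
  "faceP A b I = (\<Inter>i. {x. real_row A i \<bullet> x \<le> real_of_int (b $ i)}) \<inter> (\<Inter>i\<in>I. {x. real_row A i \<bullet> x = 0})"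
  by (auto simp: faceP_iff)

lemma convex_faceP: "convex (faceP A b I)"
  unfolding faceP_eq_Inter by (simp add: convex_Int convex_INT convex_halfspace_le convex_hyperplane)

lemma closed_faceP: "closed (faceP A b I)"
  unfolding faceP_eq_Inter by (simp add: closed_Int closed_INT closed_halfspace_le closed_hyperplane)

lemma faceP_strict_for_row:
  assumes b0: "\<And>i. 0 \<le> b $ i" and k: "k \<notin> implicit_rows A b I"
  obtains y where "y \<in> faceP A b I" "real_row A k \<bullet> y < real_of_int (b $ k)"
proof -
  obtain x where x: "x \<in> faceP A b I" "real_row A k \<bullet> x \<noteq> 0"
    using k unfolding implicit_rows_def by auto
  have "x \<in> polyP A b" using x(1) by (simp add: faceP_def)
  then have "(1 / 2) *\<^sub>R x \<in> polyP A b" by (rule scaleR_in_polyP[OF b0]) auto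
  moreover have "(1 / 2) *\<^sub>R x \<in> kerRows A I" using x(1) by (simp add: faceP_def kerRows_iff)
  ultimately have "(1 / 2) *\<^sub>R x \<in> faceP A b I" by (simp add: faceP_def)
  moreover have "real_row A k \<bullet> x \<le> real_of_int (b $ k)" using x(1) by (simp add: faceP_iff)
  then have "real_row A k \<bullet> ((1 / 2) *\<^sub>R x) < real_of_int (b $ k)"
    using x(2) b0[of k] by (cases "real_row A k \<bullet> x < 0") auto
  ultimately show ?thesis by (rule that)
qed

lemma faceP_mean_strict:
  assumes N: "finite N" "N \<noteq> {}"
    and y: "\<And>k. k \<in> N \<Longrightarrow> y k \<in> faceP A b I \<and> real_row A k \<bullet> y k < real_of_int (b $ k)"
  defines "x0 \<equiv> (\<Sum>k\<in>N. (1 / card N) *\<^sub>R y k)"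
  shows "x0 \<in> faceP A b I" and "\<And>k. k \<in> N \<Longrightarrow> real_row A k \<bullet> x0 < real_of_int (b $ k)"
proof -
  have card: "card N > 0" using N by (simp add: card_gt_0_iff)
  show "x0 \<in> faceP A b I"
    unfolding x0_def by (rule convex_sum[OF N(1) convex_faceP]) (use card y in auto)
  fix k assume k: "k \<in> N"
  have "(\<Sum>l\<in>N. real_row A k \<bullet> y l) < (\<Sum>l\<in>N. real_of_int (b $ k))"
    using y k by (intro sum_strict_mono_ex1[OF N(1)]) (auto simp: faceP_iff)
  then have "(\<Sum>l\<in>N. real_row A k \<bullet> y l) / card N < real_of_int (b $ k)"
    using card by (simp add: field_simps)
  then show "real_row A k \<bullet> x0 < real_of_int (b $ k)"
    unfolding x0_def by (simp add: inner_sum_right sum_divide_distrib)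
qed

lemma faceP_strict_point:
  fixes A :: "int^'n::finite^'m::finite"
  assumes b0: "\<And>i. 0 \<le> b $ i"
  obtains x0 where "x0 \<in> faceP A b I"
    "\<And>k. k \<notin> implicit_rows A b I \<Longrightarrow> real_row A k \<bullet> x0 < real_of_int (b $ k)"
proof (cases "implicit_rows A b I = UNIV")
  case True
  then show ?thesis using that zero_in_faceP[OF b0] by blast
next
  case False
  let ?N = "- implicit_rows A b I"
  have "\<forall>k\<in>?N. \<exists>y. y \<in> faceP A b I \<and> real_row A k \<bullet> y < real_of_int (b $ k)"
    using faceP_strict_for_row[OF b0] by (metis ComplD)
  then obtain y where "\<And>k. k \<in> ?N \<Longrightarrow> y k \<in> faceP A b I \<and> real_row A k \<bullet> y k < real_of_int (b $ k)"
    by metis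
  from faceP_mean_strict[of ?N, OF _ _ this] False show ?thesis using that by auto
qed

lemma faceP_step_along_kerRows:
  fixes A :: "int^'n::finite^'m::finite"
  assumes x0: "x0 \<in> faceP A b I"
    and strict: "\<And>k. k \<notin> E \<Longrightarrow> real_row A k \<bullet> x0 < real_of_int (b $ k)"
    and IE: "I \<subseteq> E" and y: "y \<in> kerRows A E"
  obtains t where "t > 0" "x0 + t *\<^sub>R y \<in> faceP A b I"
proof -
  define s where "s k = real_of_int (b $ k) - real_row A k \<bullet> x0" for k
  define t where "t = Min (insert 1 ((\<lambda>k. s k / (\<bar>real_row A k \<bullet> y\<bar> + 1)) ` (- E)))"
  have t: "t > 0" unfolding t_def using strict by (subst Min_gr_iff) (auto simp: s_def)
  have t_le: "t \<le> s k / (\<bar>real_row A k \<bullet> y\<bar> + 1)" if "k \<notin> E" for k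
    unfolding t_def using that by (intro Min_le) auto
  have "x0 + t *\<^sub>R y \<in> faceP A b I" unfolding faceP_iff
  proof (intro conjI allI ballI)
    fix i
    show "real_row A i \<bullet> (x0 + t *\<^sub>R y) \<le> real_of_int (b $ i)"
    proof (cases "i \<in> E")
      case True
      then show ?thesis using x0 y by (simp add: kerRows_iff faceP_iff inner_add_right)
    next
      case False
      let ?a = "\<bar>real_row A i \<bullet> y\<bar>"
      have "s i > 0" using strict[OF False] unfolding s_def by simp
      have "t * (real_row A i \<bullet> y) \<le> t * ?a" using t by (intro mult_left_mono) auto
      also have "\<dots> \<le> s i / (?a + 1) * ?a" using t_le[OF False] by (intro mult_right_mono) auto
      also have "\<dots> = s i * (?a / (?a + 1))" by simp
      also have "\<dots> \<le> s i * 1" using \<open>s i > 0\<close> by (intro mult_left_mono) auto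
      finally show ?thesis unfolding s_def by (simp add: inner_add_right)
    qed
  next
    fix i assume "i \<in> I"
    then show "real_row A i \<bullet> (x0 + t *\<^sub>R y) = 0"
      using IE x0 y by (auto simp: kerRows_iff faceP_iff inner_add_right)
  qed
  with t show ?thesis by (rule that)
qed

lemma kerRows_implicit_rows:
  fixes A :: "int^'n::finite^'m::finite"
  assumes b0: "\<And>i. 0 \<le> b $ i"
  shows "kerRows A (implicit_rows A b I) = span (faceP A b I)"
proof
  let ?F = "faceP A b I" and ?E = "implicit_rows A b I"
  have "?F \<subseteq> kerRows A ?E" unfolding implicit_rows_def by (auto simp: kerRows_iff)
  then show "span ?F \<subseteq> kerRows A ?E" by (rule span_minimal[OF _ subspace_kerRows])
  show "kerRows A ?E \<subseteq> span ?F"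
  proof
    fix y assume y: "y \<in> kerRows A ?E"
    obtain x0 where x0: "x0 \<in> ?F" "\<And>k. k \<notin> ?E \<Longrightarrow> real_row A k \<bullet> x0 < real_of_int (b $ k)"
      using faceP_strict_point[OF b0] by blast
    have "I \<subseteq> ?E" unfolding implicit_rows_def by (auto simp: faceP_iff)
    then obtain t where t: "t > 0" "x0 + t *\<^sub>R y \<in> ?F"
      using faceP_step_along_kerRows[OF x0 _ y] by blast
    then have "(1 / t) *\<^sub>R ((x0 + t *\<^sub>R y) - x0) \<in> span ?F"
      using x0(1) by (intro span_mul span_diff span_base)
    then show "y \<in> span ?F" using t by simp
  qed
qed

lemma independent_rows_extend_within:
  fixes A :: "int^'n::finite^'m::finite"
  assumes IE: "I \<subseteq> E" and inj: "inj_on (($) A) I" and indep: "independent (real_row A ` I)"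
  obtains K where "I \<subseteq> K" "K \<subseteq> E" "inj_on (($) A) K" "independent (real_row A ` K)"
    "real_row A ` E \<subseteq> span (real_row A ` K)"
proof -
  let ?R = "real_row A ` E" and ?RI = "real_row A ` I"
  obtain B where B: "?RI \<subseteq> B" "B \<subseteq> ?R" "independent B" "?R \<subseteq> span B"
    using maximal_independent_subset_extend[OF image_mono[OF IE] indep] by blast
  have fin_B: "finite B" by (rule finite_subset[OF B(2)]) simp
  have "\<forall>v\<in>B. \<exists>k. k \<in> E \<and> real_row A k = v" using B(2) by auto
  then obtain g where g: "\<And>v. v \<in> B \<Longrightarrow> g v \<in> E \<and> real_row A (g v) = v" by metis
  define K where "K = I \<union> g ` (B - ?RI)"
  have image_K: "real_row A ` K = B"
  proof -
    have "real_row A ` g ` (B - ?RI) = B - ?RI" using g by (force simp: image_image)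
    then show ?thesis unfolding K_def using B(1) by (auto simp: image_Un)
  qed
  have card_RI: "card ?RI = card I"
    using inj by (intro card_image) (simp add: inj_on_real_row_iff)
  have "card K \<le> card I + card (g ` (B - ?RI))" unfolding K_def by (rule card_Un_le)
  also have "\<dots> \<le> card I + card (B - ?RI)" using card_image_le[of "B - ?RI" g] fin_B by simp
  also have "\<dots> = card B"
    using card_Diff_subset[of ?RI B] card_mono[OF fin_B B(1)] B(1) card_RI by simp
  finally have "card K \<le> card B" .
  moreover have "card B \<le> card K" using card_image_le[of K "real_row A"] image_K by simp
  ultimately have "inj_on (real_row A) K" using eq_card_imp_inj_on[of K "real_row A"] image_K by simp
  moreover have "I \<subseteq> K" "K \<subseteq> E" using g IE unfolding K_def by auto
  moreover have "independent (real_row A ` K)" using B(3) unfolding image_K .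
  moreover have "real_row A ` E \<subseteq> span (real_row A ` K)" using B(4) unfolding image_K .
  ultimately show ?thesis using that[of K] by (simp add: inj_on_real_row_iff)
qed

lemma admissible_face_kernel:
  fixes A :: "int^'n::finite^'m::finite"
  assumes b0: "\<And>i. 0 \<le> b $ i" and adm: "admissible A I" and aff: "aff_dim (faceP A b I) = int d"
  obtains K where "I \<subseteq> K" "card K + d = CARD('n)" "inj_on (($) A) K" "independent (real_row A ` K)"
    "faceP A b I \<subseteq> kerRows A K" "dim (kerRows A K) = d"
proof -
  let ?F = "faceP A b I" and ?E = "implicit_rows A b I"
  have "aff_dim ?F = int (dim ((+) (- 0) ` ?F))"
    by (rule aff_dim_eq_dim) (rule hull_inc[OF zero_in_faceP[OF b0]])
  moreover have "kerRows A ?E = span ?F" by (rule kerRows_implicit_rows[OF b0])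
  ultimately have "dim (kerRows A ?E) = d" using aff by simp
  then have dim_rows: "d + dim (real_row A ` ?E) = CARD('n)" using dim_kerRows_add_dim_rows[of A ?E] by simp
  have "I \<subseteq> ?E" unfolding implicit_rows_def by (auto simp: faceP_iff)
  then obtain K where K: "I \<subseteq> K" "K \<subseteq> ?E" "inj_on (($) A) K" "independent (real_row A ` K)"
      "real_row A ` ?E \<subseteq> span (real_row A ` K)"
    using independent_rows_extend_within[OF _ admissible_inj_independent[OF adm]] by blast
  have ker: "kerRows A K = kerRows A ?E" by (rule kerRows_eq_if_span[OF K(5,2)])
  have "span (real_row A ` K) \<subseteq> span (real_row A ` ?E)" using K(2) by (intro span_mono image_mono)
  moreover have "span (real_row A ` ?E) \<subseteq> span (real_row A ` K)"
    using span_minimal[OF K(5) subspace_span] .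
  ultimately have "span (real_row A ` K) = span (real_row A ` ?E)" by (rule subset_antisym)
  then have "dim (real_row A ` K) = dim (real_row A ` ?E)" by (metis dim_span)
  moreover have "card (real_row A ` K) = card K"
    using K(3) inj_on_real_row_iff by (blast intro: card_image)
  ultimately have "card K = dim (real_row A ` ?E)" using dim_eq_card_independent[OF K(4)] by simp
  show ?thesis
  proof (rule that[OF K(1) _ K(3,4)])
    show "card K + d = CARD('n)" using \<open>card K = dim (real_row A ` ?E)\<close> dim_rows by simp
    show "faceP A b I \<subseteq> kerRows A K"
      unfolding ker kerRows_implicit_rows[OF b0] by (rule span_superset)
    show "dim (kerRows A K) = d" unfolding ker by fact
  qed
qed

text \<open>Dirichlet's approximation |k r - h| < 1/N makes k u - h g = k s v + (k r - h) g exceed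
  the point k s v of P by less than 1 in every row, so by integrality it lies in P.\<close>

lemma integer_point_by_dirichlet:
  fixes A :: "int^'n::finite^'m::finite"
  assumes b0: "\<And>i. 0 \<le> b $ i" and v: "v \<in> polyP A b"
    and u: "realV u = r *\<^sub>R realV g + s *\<^sub>R v" and s: "0 \<le> s"
    and N: "1 \<le> N" "\<And>i. \<bar>int_inner (A $ i) g\<bar> \<le> N" and sN: "s * N \<le> 1"
  obtains k h where "0 < k" "realV (k *s u - h *s g) \<in> polyP A b"
proof -
  have "nat N > 0" using N(1) by simp
  then obtain h k where hk: "0 < k" "k \<le> int (nat N)" "\<bar>of_int k * r - of_int h\<bar> < 1 / real (nat N)"
    using Dirichlet_approx[of "nat N" r] by blast
  let ?q = "of_int k * r - of_int h"
  have z: "realV (k *s u - h *s g) = (of_int k * s) *\<^sub>R v + ?q *\<^sub>R realV g"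
    by (simp add: realV_diff realV_scale u algebra_simps)
  have "of_int k * s \<le> of_int N * s" using hk(2) N(1) s by (intro mult_right_mono) auto
  then have "(of_int k * s) *\<^sub>R v \<in> polyP A b"
    using hk(1) s sN by (intro scaleR_in_polyP[OF b0 v]) (auto simp: mult.commute)
  then have near: "of_int k * s * (real_row A i \<bullet> v) \<le> real_of_int (b $ i)" for i
    unfolding polyP_iff by simp
  have small: "?q * (real_row A i \<bullet> realV g) < 1" for i
  proof -
    have "?q * (real_row A i \<bullet> realV g) \<le> \<bar>?q\<bar> * \<bar>real_row A i \<bullet> realV g\<bar>"
      by (metis abs_ge_self abs_mult)
    also have "\<dots> \<le> \<bar>?q\<bar> * of_int N" using N(2)[of i] by (intro mult_left_mono) (auto simp: realV_inner)
    also have "\<dots> < 1 / of_int N * of_int N" using hk(3) N(1) by (intro mult_strict_right_mono) auto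
    also have "\<dots> = 1" using N(1) by simp
    finally show ?thesis .
  qed
  have "realV (k *s u - h *s g) \<in> polyP A b"
    unfolding polyP_iff
  proof
    fix i
    have "real_row A i \<bullet> realV (k *s u - h *s g)
        = of_int k * s * (real_row A i \<bullet> v) + ?q * (real_row A i \<bullet> realV g)"
      by (simp add: z inner_add_right)
    then have "real_of_int (int_inner (A $ i) (k *s u - h *s g)) < real_of_int (b $ i) + 1"
      using near[of i] small[of i] by (simp add: realV_inner)
    then have "int_inner (A $ i) (k *s u - h *s g) \<le> b $ i" by linarith
    then show "real_row A i \<bullet> realV (k *s u - h *s g) \<le> real_of_int (b $ i)"
      by (simp add: realV_inner)
  qed
  with hk(1) show ?thesis by (rule that)
qed

section \<open>Integer points in ker A_K\<close>

text \<open>The rows of A_K, those of A_I first, so that gcd A_I divides every determinant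
  they start.\<close>

definition rows_extending :: "int^'n^'m \<Rightarrow> 'm set \<Rightarrow> 'm set \<Rightarrow> (int^'n) list" where
  "rows_extending A I K = rows_of A I @ rows_of A (K - I)"

context
  fixes A :: "int^'n::finite^'m::finite" and I K :: "'m set"
  assumes adm: "admissible A I" and I_sub_K: "I \<subseteq> K"
    and inj_K: "inj_on (($) A) K" and indep_K: "independent (real_row A ` K)"
begin

lemma
  shows set_rows_extending: "set (rows_extending A I K) = ($) A ` K"
    and distinct_rows_extending: "distinct (rows_extending A I K)"
    and length_rows_extending: "length (rows_extending A I K) = card K"
proof -
  have inj_I: "inj_on (($) A) I" and inj_D: "inj_on (($) A) (K - I)"
    using inj_K I_sub_K by (auto intro: inj_on_subset)
  show "set (rows_extending A I K) = ($) A ` K"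
    unfolding rows_extending_def using I_sub_K by (auto simp: set_rows_of)
  have "($) A ` I \<inter> ($) A ` (K - I) = {}"
    using inj_on_image_Int[OF inj_K, of I "K - I"] I_sub_K by auto
  then show "distinct (rows_extending A I K)"
    unfolding rows_extending_def using distinct_rows_of[OF inj_I] distinct_rows_of[OF inj_D]
    by (simp add: set_rows_of)
  show "length (rows_extending A I K) = card K"
    unfolding rows_extending_def using I_sub_K by (simp add: card_Diff_subset card_mono)
qed

lemma det_rows_extending_factor:
  assumes "card K + length xs + length zs + 1 = CARD('n)"
  shows "\<exists>w. \<forall>y. det_rows (rows_extending A I K @ xs @ y # zs) = gcdRows A I * int_inner w y"
proof -
  let ?L = "rows_extending A I K @ xs"
  have "Suc (length ?L + length zs) = CARD('n)" using assms by (simp add: length_rows_extending)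
  moreover have "gcdRows A I \<noteq> 0" using gcdRows_pos[OF adm] by simp
  moreover have "gcdRows A I dvd det_rows (?L @ y # zs)" for y
    using gcdRows_dvd_det_rows[OF adm, of "rows_of A (K - I) @ xs @ y # zs"] assms
    by (simp add: rows_extending_def length_rows_extending[symmetric])
  ultimately obtain w where "\<And>y. det_rows (?L @ y # zs) = gcdRows A I * int_inner w y"
    by (rule det_rows_linear_factor) blast
  then show ?thesis by auto
qed

lemma det_rows_extending_eq_zero:
  assumes card_K: "card K + 2 = CARD('n)"
    and common: "x \<in> ($) A ` K \<or> y \<in> ($) A ` K \<or> x = y"
  shows "det_rows (rows_extending A I K @ [x, y]) = 0"
proof -
  let ?L = "rows_extending A I K"
  have len: "length (?L @ [x, y]) = CARD('n)" using card_K by (simp add: length_rows_extending)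
  from common consider "x \<in> set ?L" | "y \<in> set ?L" | "x = y"
    by (auto simp: set_rows_extending)
  then show ?thesis
  proof cases
    case 1
    then show ?thesis using det_rows_append_common_row[OF len, of x] by simp
  next
    case 2
    then show ?thesis using det_rows_append_common_row[OF len, of y] by simp
  next
    case 3
    then show ?thesis using det_rows_append_common_row[of "?L @ [x]" "[y]" y] len by simp
  qed
qed

lemma det_rows_extending_beta_nonzero:
  assumes card_K: "card K + 2 = CARD('n)" and beta: "realV \<beta> \<notin> span (real_row A ` K)"
  obtains y where "det_rows (rows_extending A I K @ [y, \<beta>]) \<noteq> 0"
proof -
  let ?L = "rows_extending A I K"
  have "\<beta> \<notin> set ?L"
  proof
    assume "\<beta> \<in> set ?L"
    then have "realV \<beta> \<in> real_row A ` K" by (auto simp: set_rows_extending)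
    then have "realV \<beta> \<in> span (real_row A ` K)" by (rule span_base)
    with beta show False by contradiction
  qed
  then have dist: "distinct (?L @ [\<beta>])" using distinct_rows_extending by simp
  have indep: "independent (realV ` set (?L @ [\<beta>]))"
    using independent_insertI[OF beta indep_K] by (simp add: set_rows_extending image_image)
  have "length (?L @ [\<beta>]) + 1 = CARD('n)" using card_K by (simp add: length_rows_extending)
  then obtain y where y: "det_rows ((?L @ [\<beta>]) @ [y]) \<noteq> 0"
    using independent_rows_extend_one_det_nonzero[OF _ dist indep] by blast
  moreover have "\<bar>det_rows (?L @ [y, \<beta>])\<bar> = \<bar>det_rows (?L @ [\<beta>, y])\<bar>"
    by (rule abs_det_rows_mset_eq) (use card_K in \<open>simp_all add: length_rows_extending\<close>)
  ultimately have "det_rows (?L @ [y, \<beta>]) \<noteq> 0" by auto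
  then show ?thesis by (rule that)
qed

lemma abs_int_inner_row_le_DeltaI:
  assumes card_K: "card K + 2 = CARD('n)"
    and g: "\<And>y. det_rows (rows_extending A I K @ [y, \<beta>]) = gcdRows A I * int_inner g y"
    and row: "A $ k \<notin> ($) A ` K"
  shows "real_of_int \<bar>int_inner g (A $ k)\<bar> \<le> DeltaI \<beta> A I"
proof -
  let ?L = "rows_extending A I K" and ?G = "gcdRows A I"
  have "k \<notin> K" using row by blast
  then have card: "card (insert k K) + 1 = CARD('n)" using card_K by simp
  have inj: "inj_on (($) A) (insert k K)" using inj_K row \<open>k \<notin> K\<close> by simp
  have dist: "distinct (?L @ [A $ k])" using distinct_rows_extending row by (simp add: set_rows_extending)
  have set: "set (?L @ [A $ k]) = ($) A ` insert k K" by (simp add: set_rows_extending)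
  have "I \<subseteq> insert k K" using I_sub_K by blast
  then have "real_of_int \<bar>det_rows ((?L @ [A $ k]) @ [\<beta>])\<bar> \<le> real_of_int ?G * DeltaI \<beta> A I"
    by (rule abs_det_rows_le_DeltaI[OF adm _ card inj dist set])
  then have "real_of_int ?G * real_of_int \<bar>int_inner g (A $ k)\<bar> \<le> real_of_int ?G * DeltaI \<beta> A I"
    using gcdRows_pos[OF adm] by (simp add: g abs_mult)
  then show ?thesis using gcdRows_pos[OF adm] by simp
qed

lemma kernel_line_vector:
  assumes card_K: "card K + 1 = CARD('n)"
  obtains w where "w \<noteq> 0" "realV w \<in> kerRows A K"
    "\<And>\<beta>. real_of_int \<bar>int_inner w \<beta>\<bar> \<le> DeltaI \<beta> A I"
proof -
  let ?L = "rows_extending A I K" and ?G = "gcdRows A I"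
  have G: "?G > 0" by (rule gcdRows_pos[OF adm])
  obtain w where w: "\<And>y. det_rows (?L @ [y]) = ?G * int_inner w y"
    using det_rows_extending_factor[of "[]" "[]"] card_K by auto
  have "length ?L + 1 = CARD('n)" using card_K by (simp add: length_rows_extending)
  moreover have "independent (realV ` set ?L)" using indep_K by (simp add: set_rows_extending image_image)
  ultimately obtain y where "det_rows (?L @ [y]) \<noteq> 0"
    using independent_rows_extend_one_det_nonzero[OF _ distinct_rows_extending] by blast
  then have "w \<noteq> 0" using w by auto
  moreover have "realV w \<in> kerRows A K"
    unfolding kerRows_iff
  proof
    fix k assume "k \<in> K"
    then have "det_rows (?L @ [A $ k]) = 0"
      by (intro det_rows_append_common_row[of _ _ "A $ k"])
        (use card_K in \<open>auto simp: length_rows_extending set_rows_extending\<close>)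
    then show "real_row A k \<bullet> realV w = 0" using w G by (simp add: realV_inner int_inner_commute)
  qed
  moreover have "real_of_int \<bar>int_inner w \<beta>\<bar> \<le> DeltaI \<beta> A I" for \<beta>
  proof -
    have "real_of_int ?G * real_of_int \<bar>int_inner w \<beta>\<bar> = real_of_int \<bar>det_rows (?L @ [\<beta>])\<bar>"
      using G by (simp add: w abs_mult)
    also have "\<dots> \<le> real_of_int ?G * DeltaI \<beta> A I"
      by (rule abs_det_rows_le_DeltaI[OF adm I_sub_K card_K inj_K distinct_rows_extending
            set_rows_extending])
    finally show ?thesis using G by simp
  qed
  ultimately show ?thesis using that by blast
qed

text \<open>g is the primitive integer vector on the line of ker A_K orthogonal to \<beta>, obtained from the
  cofactors y \<mapsto> det(A_K; y; \<beta>) by dividing out gcd A_I and the content \<gamma>; u comes from the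
  cofactors z \<mapsto> det(A_K; c; z) for Bezout coefficients c with c \<bullet> g = 1.\<close>

lemma kernel_plane_vectors:
  assumes card_K: "card K + 2 = CARD('n)" and beta: "realV \<beta> \<notin> span (real_row A ` K)"
  obtains \<gamma> g u where "\<gamma> > 0" "g \<noteq> 0" "realV g \<in> kerRows A K" "int_inner g \<beta> = 0"
    "realV u \<in> kerRows A K" "int_inner u \<beta> = \<gamma>"
    "\<And>k. A $ k \<notin> ($) A ` K \<Longrightarrow> real_of_int \<gamma> * \<bar>int_inner g (A $ k)\<bar> \<le> DeltaI \<beta> A I"
proof -
  let ?L = "rows_extending A I K" and ?G = "gcdRows A I"
  have G: "?G > 0" by (rule gcdRows_pos[OF adm])
  obtain g where g: "\<And>y. det_rows (?L @ [y, \<beta>]) = ?G * int_inner g y"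
    using det_rows_extending_factor[of "[]" "[\<beta>]"] card_K by auto
  obtain y0 where "det_rows (?L @ [y0, \<beta>]) \<noteq> 0"
    by (rule det_rows_extending_beta_nonzero[OF card_K beta])
  then have "g \<noteq> 0" using g by auto
  then obtain \<gamma> g1 c where \<gamma>: "\<gamma> > 0" and g1: "g = \<gamma> *s g1" and c: "int_inner c g1 = 1"
    using int_vec_primitive_factor by blast
  obtain u where u: "\<And>z. det_rows (?L @ [c, z]) = ?G * int_inner u z"
    using det_rows_extending_factor[of "[c]" "[]"] card_K by auto
  have g1_orth: "int_inner g1 x = 0" if "x \<in> ($) A ` K \<or> x = \<beta>" for x
    using det_rows_extending_eq_zero[OF card_K, of x \<beta>] that g[of x] g1 G \<gamma>
    by (auto simp: int_inner_scale_left)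
  have u_orth: "int_inner u x = 0" if "x \<in> ($) A ` K" for x
    using det_rows_extending_eq_zero[OF card_K, of c x] that u[of x] G by auto
  have "?G * int_inner u \<beta> = det_rows (?L @ [c, \<beta>])" by (rule u[symmetric])
  also have "\<dots> = ?G * (\<gamma> * int_inner g1 c)" by (simp add: g g1 int_inner_scale_left)
  also have "\<dots> = ?G * \<gamma>" using c by (simp add: int_inner_commute)
  finally have "int_inner u \<beta> = \<gamma>" using G by simp
  moreover have ker: "realV x \<in> kerRows A K" if "\<And>k. k \<in> K \<Longrightarrow> int_inner x (A $ k) = 0" for x
    using that by (simp add: kerRows_iff realV_inner int_inner_commute)
  then have "realV g1 \<in> kerRows A K" "realV u \<in> kerRows A K"
    using g1_orth u_orth by blast+
  moreover have "g1 \<noteq> 0" using \<open>g \<noteq> 0\<close> g1 by auto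
  moreover have "real_of_int \<gamma> * \<bar>int_inner g1 (A $ k)\<bar> \<le> DeltaI \<beta> A I" if "A $ k \<notin> ($) A ` K" for k
    using abs_int_inner_row_le_DeltaI[OF card_K g that] \<gamma> by (simp add: g1 int_inner_scale_left abs_mult)
  ultimately show ?thesis using that \<gamma> g1_orth[of \<beta>] by blast
qed

lemma objective_lt_DeltaI_dim1:
  assumes b_nonneg: "\<And>i. 0 \<le> b $ i" and integer_free: "\<And>z. realV z \<in> polyP A b \<Longrightarrow> z = 0"
    and face_sub_ker: "faceP A b I \<subseteq> kerRows A K"
    and card_K: "card K + 1 = CARD('n)" and dim_ker: "dim (kerRows A K) = 1"
    and v: "v \<in> faceP A b I" and pos: "realV \<beta> \<bullet> v > 0"
  shows "realV \<beta> \<bullet> v < DeltaI \<beta> A I"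
proof -
  obtain w where w: "w \<noteq> 0" "realV w \<in> kerRows A K"
      "\<And>\<beta>. real_of_int \<bar>int_inner w \<beta>\<bar> \<le> DeltaI \<beta> A I"
    using kernel_line_vector[OF card_K] by blast
  have "v \<in> kerRows A K" using v face_sub_ker by auto
  then obtain t where t: "v = t *\<^sub>R realV w"
    using dim_one_subspace_multiple[OF subspace_kerRows dim_ker w(2)] w(1) by auto
  have "\<bar>t\<bar> < 1"
  proof (rule ccontr)
    assume "\<not> \<bar>t\<bar> < 1"
    define z where "z = (if 0 < t then w else - w)"
    have "realV z = (1 / \<bar>t\<bar>) *\<^sub>R v"
      using \<open>\<not> \<bar>t\<bar> < 1\<close> unfolding z_def t by (auto simp: Finite_Cartesian_Product.vec_eq_iff)
    moreover have "v \<in> polyP A b" using v unfolding faceP_def by simp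
    ultimately have "realV z \<in> polyP A b"
      using \<open>\<not> \<bar>t\<bar> < 1\<close> by (simp add: scaleR_in_polyP[OF b_nonneg])
    then have "z = 0" by (rule integer_free)
    with w(1) show False unfolding z_def by (auto split: if_splits)
  qed
  let ?q = "realV \<beta> \<bullet> realV w"
  have q_le: "\<bar>?q\<bar> \<le> DeltaI \<beta> A I" using w(3)[of \<beta>] by (simp add: realV_inner int_inner_commute)
  have "realV \<beta> \<bullet> v = t * ?q" using t by simp
  moreover from this have "?q \<noteq> 0" using pos by auto
  then have "\<bar>t\<bar> * \<bar>?q\<bar> < 1 * \<bar>?q\<bar>"
    using \<open>\<bar>t\<bar> < 1\<close> by (intro mult_strict_right_mono) auto
  then have "t * ?q < \<bar>?q\<bar>" using abs_ge_self[of "t * ?q"] by (simp add: abs_mult)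
  ultimately show ?thesis using q_le by simp
qed

lemma objective_lt_DeltaI_dim2:
  assumes b_nonneg: "\<And>i. 0 \<le> b $ i" and integer_free: "\<And>z. realV z \<in> polyP A b \<Longrightarrow> z = 0"
    and face_sub_ker: "faceP A b I \<subseteq> kerRows A K" and rank: "rank (realM A) = CARD('n)"
    and card_K: "card K + 2 = CARD('n)" and dim_ker: "dim (kerRows A K) = 2"
    and v: "v \<in> faceP A b I" and pos: "realV \<beta> \<bullet> v > 0"
  shows "realV \<beta> \<bullet> v < DeltaI \<beta> A I"
proof (rule ccontr)
  let ?M = "realV \<beta> \<bullet> v"
  assume "\<not> ?M < DeltaI \<beta> A I"
  then have Delta_le: "DeltaI \<beta> A I \<le> ?M" by simp
  have v_ker: "v \<in> kerRows A K" using v face_sub_ker by auto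
  have "realV \<beta> \<notin> span (real_row A ` K)"
    using inner_eq_zero_if_kerRows_span[OF v_ker, of "realV \<beta>"] pos by auto
  then obtain \<gamma> g u where \<gamma>: "\<gamma> > 0" and g: "g \<noteq> 0" "realV g \<in> kerRows A K" "int_inner g \<beta> = 0"
      and u: "realV u \<in> kerRows A K" "int_inner u \<beta> = \<gamma>"
      and row_bound: "\<And>k. A $ k \<notin> ($) A ` K \<Longrightarrow> real_of_int \<gamma> * \<bar>int_inner g (A $ k)\<bar> \<le> DeltaI \<beta> A I"
    using kernel_plane_vectors[OF card_K] by blast
  have "realV \<beta> \<bullet> realV g = 0" using g(3) by (simp add: realV_inner int_inner_commute)
  moreover have "?M \<noteq> 0" using pos by simp
  ultimately obtain r where "realV u = r *\<^sub>R realV g + ((realV \<beta> \<bullet> realV u) / ?M) *\<^sub>R v"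
    using dim_two_subspace_decompose[OF subspace_kerRows dim_ker g(2) v_ker u(1)] g(1) by auto
  then have r: "realV u = r *\<^sub>R realV g + (real_of_int \<gamma> / ?M) *\<^sub>R v"
    using u(2) by (simp add: realV_inner int_inner_commute)
  obtain i1 where N_pos: "1 \<le> \<bar>int_inner (A $ i1) g\<bar>"
      and N_ge: "\<And>i. \<bar>int_inner (A $ i) g\<bar> \<le> \<bar>int_inner (A $ i1) g\<bar>"
    using max_abs_row_inner[OF rank g(1)] by blast
  let ?N = "\<bar>int_inner (A $ i1) g\<bar>"
  have "real_of_int \<gamma> * real_of_int ?N \<le> ?M"
  proof (cases "A $ i1 \<in> ($) A ` K")
    case True
    then have "int_inner (A $ i1) g = 0" using g(2) by (auto simp: kerRows_iff realV_inner)
    then show ?thesis using pos by simp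
  next
    case False
    then show ?thesis using row_bound[OF False] Delta_le by (simp add: int_inner_commute)
  qed
  then have small: "real_of_int \<gamma> / ?M * real_of_int ?N \<le> 1" using pos by (simp add: field_simps)
  have "v \<in> polyP A b" using v by (simp add: faceP_def)
  moreover have "0 \<le> real_of_int \<gamma> / ?M" using \<gamma> pos by simp
  ultimately obtain k h where kh: "0 < k" "realV (k *s u - h *s g) \<in> polyP A b"
    using integer_point_by_dirichlet[OF b_nonneg _ r _ N_pos N_ge small] by blast
  have "k *s u - h *s g = 0" by (rule integer_free[OF kh(2)])
  moreover have "int_inner (k *s u - h *s g) \<beta> = k * \<gamma>"
    using u(2) g(3) by (simp add: int_inner_diff_left int_inner_scale_left)
  ultimately show False using kh(1) \<gamma> by simp
qed

end

section \<open>Proximity\<close>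

lemma objective_lt_DeltaI:
  fixes A :: "int^'n::finite^'m::finite"
  assumes b0: "\<And>i. 0 \<le> b $ i" and integer_free: "\<And>z. realV z \<in> polyP A b \<Longrightarrow> z = 0"
    and rank: "rank (realM A) = CARD('n)" and adm: "admissible A I"
    and aff: "aff_dim (faceP A b I) = int d" and d: "d = 1 \<or> d = 2"
    and v: "v \<in> faceP A b I" and pos: "realV \<beta> \<bullet> v > 0"
  shows "realV \<beta> \<bullet> v < DeltaI \<beta> A I"
proof -
  obtain K where K: "I \<subseteq> K" "card K + d = CARD('n)" "inj_on (($) A) K" "independent (real_row A ` K)"
      "faceP A b I \<subseteq> kerRows A K" "dim (kerRows A K) = d"
    by (rule admissible_face_kernel[OF b0 adm aff])
  from d show ?thesis
  proof
    assume "d = 1"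
    then show ?thesis
      using objective_lt_DeltaI_dim1[OF adm K(1,3,4) b0 integer_free K(5) _ _ v pos] K(2,6) by simp
  next
    assume "d = 2"
    then show ?thesis
      using objective_lt_DeltaI_dim2[OF adm K(1,3,4) b0 integer_free K(5) rank _ _ v pos] K(2,6) by simp
  qed
qed

lemma bounded_if_int_functionals_bounded:
  fixes S :: "(real^'n::finite) set"
  assumes "\<And>\<beta>. \<exists>c. \<forall>x\<in>S. realV \<beta> \<bullet> x \<le> c"
  shows "bounded S"
proof -
  have "\<exists>C. \<forall>x\<in>S. \<bar>x $ j\<bar> \<le> C" for j
  proof -
    obtain c1 where c1: "\<forall>x\<in>S. realV (axis j 1) \<bullet> x \<le> c1" using assms by blast
    obtain c2 where c2: "\<forall>x\<in>S. realV (- axis j 1) \<bullet> x \<le> c2" using assms by blast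
    have "realV (axis j 1) \<bullet> x = x $ j" "realV (- axis j 1) \<bullet> x = - x $ j" for x :: "real^'n"
      by (simp_all add: realV_minus realV_axis inner_axis')
    then have "\<forall>x\<in>S. \<bar>x $ j\<bar> \<le> max c1 c2" using c1 c2 by force
    then show ?thesis by blast
  qed
  then obtain C where C: "\<And>j x. x \<in> S \<Longrightarrow> \<bar>x $ j\<bar> \<le> C j" by metis
  show ?thesis unfolding bounded_iff
  proof (intro exI ballI)
    fix x assume "x \<in> S"
    then have "(\<Sum>j\<in>UNIV. \<bar>x $ j\<bar>) \<le> (\<Sum>j\<in>UNIV. C j)" by (intro sum_mono C)
    then show "norm x \<le> (\<Sum>j\<in>UNIV. C j)" using norm_le_l1_cart[of x] by linarith
  qed
qed

lemma is_proxI_lt_one: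
  fixes A :: "int^'n::finite^'m::finite"
  assumes b0: "\<And>i. 0 \<le> b $ i"
    and bound: "\<And>\<beta> v. v \<in> faceP A b I \<Longrightarrow> realV \<beta> \<bullet> v > 0 \<Longrightarrow> realV \<beta> \<bullet> v < DeltaI \<beta> A I"
  obtains p where "is_proxI A b \<alpha> I p" "p < 1"
proof -
  let ?F = "faceP A b I"
  have "bounded ?F"
  proof (rule bounded_if_int_functionals_bounded)
    fix \<beta> :: "int^'n"
    have "realV \<beta> \<bullet> x \<le> max 0 (DeltaI \<beta> A I)" if "x \<in> ?F" for x
      using bound[OF that, of \<beta>] by linarith
    then show "\<exists>c. \<forall>x\<in>?F. realV \<beta> \<bullet> x \<le> c" by blast
  qed
  then have "compact ?F" using closed_faceP by (simp add: compact_eq_bounded_closed)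
  moreover have zero: "0 \<in> ?F" by (rule zero_in_faceP[OF b0])
  moreover have "continuous_on ?F (\<lambda>y. realV \<alpha> \<bullet> y)" by (intro continuous_intros)
  ultimately obtain x where x: "x \<in> ?F" "\<And>y. y \<in> ?F \<Longrightarrow> realV \<alpha> \<bullet> y \<le> realV \<alpha> \<bullet> x"
    using continuous_attains_sup[of ?F "\<lambda>y. realV \<alpha> \<bullet> y"] by blast
  show ?thesis
  proof (cases "realV \<alpha> \<bullet> x > 0")
    case True
    then have "realV \<alpha> \<bullet> x < DeltaI \<alpha> A I" by (rule bound[OF x(1)])
    with True have "is_proxI A b \<alpha> I (realV \<alpha> \<bullet> x / DeltaI \<alpha> A I)"
      unfolding is_proxI_def using x by auto
    with \<open>realV \<alpha> \<bullet> x < DeltaI \<alpha> A I\<close> True show ?thesis by (intro that) auto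
  next
    case False
    then have "realV \<alpha> \<bullet> x = 0" using x(2)[OF zero] by simp
    then have "is_proxI A b \<alpha> I 0" unfolding is_proxI_def using x by auto
    then show ?thesis by (rule that) simp
  qed
qed

lemma prox_lt_one_if_integer_free:
  fixes A :: "int^'n::finite^'m::finite"
  assumes b0: "\<And>i. 0 \<le> b $ i" and integer_free: "\<And>z. realV z \<in> polyP A b \<Longrightarrow> z = 0"
    and rank: "rank (realM A) = CARD('n)" and d: "d = 1 \<or> d = 2"
  shows "prox_lt_one A b \<alpha> (int d)"
  unfolding prox_lt_one_def
proof (intro allI impI, elim conjE)
  fix I assume adm: "admissible A I" and aff: "aff_dim (faceP A b I) = int d"
  obtain p where "is_proxI A b \<alpha> I p" "p < 1"
    by (rule is_proxI_lt_one[OF b0 objective_lt_DeltaI[OF b0 integer_free rank adm aff d]])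
  then show "\<exists>p. is_proxI A b \<alpha> I p \<and> p < 1" by blast
qed

theorem lemma3:
  fixes A :: "int^'n^'m" and b :: "int^'m" and \<alpha> :: "int^'n"
  assumes "rank (realM A) = CARD('n)"
    and "\<alpha> \<noteq> 0"
    and "{x \<in> polyP A b. \<forall>j. x $ j \<in> \<int>} = {0}"
  shows "prox_lt_one A b \<alpha> 1 \<and> prox_lt_one A b \<alpha> 2"
proof -
  have "0 \<in> polyP A b" using assms(3) by blast
  then have b0: "0 \<le> b $ i" for i unfolding polyP_iff by simp
  have integer_free: "z = 0" if "realV z \<in> polyP A b" for z
  proof -
    have "realV z \<in> {x \<in> polyP A b. \<forall>j. x $ j \<in> \<int>}" using that by simp
    then show "z = 0" using assms(3) by auto
  qed
  have "prox_lt_one A b \<alpha> (int d)" if "d = 1 \<or> d = 2" for d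
    by (rule prox_lt_one_if_integer_free[OF b0 integer_free assms(1) that])
  from this[of 1] this[of 2] show ?thesis by simp
qed

end
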